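(* Let $h\in\mathcal H$ and $\varphi(\underline{x})=h(x_0,x_1)$ on $X=[0,1]^{\mathbb N_0}$. Let $a,b\in[0,1]$ with $a\ne b$, let $I_{a,b}$ be the closed interval between $a$ and $b$, and assume $h$ is $C^1$ on a neighborhood of $\Lambda=\{(x,x): x\in I_{a,b}\}$. If $I_{a,b}\subset\mathrm{m}_h$, then \[H_\varphi(a^\infty,b^\infty)=\int_a^b D_2h(x,x)\,dx=-\int_a^b D_1h(x,x)\,dx=-H_\varphi(b^\infty,a^\infty).\]
   Context: $X=[0,1]^{\mathbb N_0}$ with metric $d_X(\underline{x},\underline{y})=\sum_{i\ge0}|x_i-y_i|/2^{i+1}$ and shift $\sigma(\underline{x})_i=x_{i+1}$. $\alpha_\varphi=\inf_\mu\int\varphi\,d\mu$ over $\sigma$-invariant Borel probability measures. $B(\underline{x},\underline{y},n;\varepsilon)=\{\underline{z}: d_X(\underline{x},\underline{z})<\varepsilon,\ d_X(\sigma^n\underline{z},\underline{y})<\varepsilon\}$; Peierls barrier $H_\varphi(\underline{x},\underline{y})=\lim_{\varepsilon\to0}\liminf_{n\to\infty}\inf\{\sum_{i=0}^{n-1}(\varphi(\sigma^i\underline{z})-\alpha_\varphi): \underline{z}\in B(\underline{x},\underline{y},n;\varepsilon)\}$. $h^*=\min_x h(x,x)$, $\mathrm{m}_h=\{a: h(a,a)=h^*\}$, $a^\infty=aaa\ldots$; $D_i$ is the partial derivative in the $i$-th variable. A finite sequence $(x_k,\dots,x_l)$ is minimal (for $h$) if $\sum_{i=k}^{l-1}h(x_i,x_{i+1})\le\sum_{i=k}^{l-1}h(y_i,y_{i+1})$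 for every $(y_k,\dots,y_l)$ in $[0,1]$ with the same endpoints. $\mathcal H$ is the set of Lipschitz $h:[0,1]^2\to\mathbb R$ such that (H3) if $\xi_1<\xi_2$, $\eta_1<\eta_2$ then $h(\xi_1,\eta_1)+h(\xi_2,\eta_2)<h(\xi_1,\eta_2)+h(\xi_2,\eta_1)$; and (H4) if $(x_{-1},x_0,x_1)\ne(x'_{-1},x_0,x'_1)$ are both minimal then $(x_{-1}-x'_{-1})(x_1-x'_1)<0$. *)

theory Defs
  imports "HOL-Analysis.Analysis" "HOL-Probability.Probability"
begin

definition Xs :: "(nat \<Rightarrow> real) set" where
  "Xs = {x. \<forall>i. x i \<in> {0..1}}"

definition dX :: "(nat \<Rightarrow> real) \<Rightarrow> (nat \<Rightarrow> real) \<Rightarrow> real" where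
  "dX x y = (\<Sum>i. \<bar>x i - y i\<bar> / 2 ^ (i + 1))"

definition shift :: "(nat \<Rightarrow> real) \<Rightarrow> (nat \<Rightarrow> real)" where
  "shift x = (\<lambda>i. x (Suc i))"

definition X_open :: "(nat \<Rightarrow> real) set \<Rightarrow> bool" where
  "X_open U \<longleftrightarrow> U \<subseteq> Xs \<and> (\<forall>x\<in>U. \<exists>e>0. \<forall>y\<in>Xs. dX x y < e \<longrightarrow> y \<in> U)"

definition borelX :: "(nat \<Rightarrow> real) measure" where
  "borelX = sigma Xs {U. X_open U}"

definition inv_measures :: "(nat \<Rightarrow> real) measure set" where
  "inv_measures = {\<mu>. prob_space \<mu> \<and> sets \<mu> = sets borelX \<and> shift \<in> measurable \<mu> \<mu> \<and>
      (\<forall>A\<in>sets \<mu>. emeasure \<mu> (shift -` A \<inter> space \<mu>) = emeasure \<mu> A)}"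

definition alpha :: "((nat \<Rightarrow> real) \<Rightarrow> real) \<Rightarrow> real" where
  "alpha \<phi> = Inf ((\<lambda>\<mu>. integral\<^sup>L \<mu> \<phi>) ` inv_measures)"

definition Bset :: "(nat \<Rightarrow> real) \<Rightarrow> (nat \<Rightarrow> real) \<Rightarrow> nat \<Rightarrow> real \<Rightarrow> (nat \<Rightarrow> real) set" where
  "Bset x y n \<epsilon> = {z \<in> Xs. dX x z < \<epsilon> \<and> dX ((shift ^^ n) z) y < \<epsilon>}"

definition peierls :: "((nat \<Rightarrow> real) \<Rightarrow> real) \<Rightarrow> (nat \<Rightarrow> real) \<Rightarrow> (nat \<Rightarrow> real) \<Rightarrow> ereal" where
  "peierls \<phi> x y = Lim (at_right 0) (\<lambda>\<epsilon>::real.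
      liminf (\<lambda>n. INF z \<in> Bset x y n \<epsilon>. ereal (\<Sum>i<n. \<phi> ((shift ^^ i) z) - alpha \<phi>)))"

definition minimal3 :: "(real \<Rightarrow> real \<Rightarrow> real) \<Rightarrow> real \<Rightarrow> real \<Rightarrow> real \<Rightarrow> bool" where
  "minimal3 h u v w \<longleftrightarrow> u \<in> {0..1} \<and> v \<in> {0..1} \<and> w \<in> {0..1} \<and>
     (\<forall>y\<in>{0..1}. h u v + h v w \<le> h u y + h y w)"

definition classH :: "(real \<Rightarrow> real \<Rightarrow> real) \<Rightarrow> bool" where
  "classH h \<longleftrightarrow>
     (\<exists>C. C-lipschitz_on ({0..1} \<times> {0..1}) (\<lambda>(x, y). h x y)) \<and>
     (\<forall>\<xi>1 \<in> {0..1}. \<forall>\<xi>2 \<in> {0..1}. \<forall>\<eta>1 \<in> {0..1}. \<forall>\<eta>2 \<in> {0..1}.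
        \<xi>1 < \<xi>2 \<longrightarrow> \<eta>1 < \<eta>2 \<longrightarrow> h \<xi>1 \<eta>1 + h \<xi>2 \<eta>2 < h \<xi>1 \<eta>2 + h \<xi>2 \<eta>1) \<and>
     (\<forall>u v w u' w'. minimal3 h u v w \<longrightarrow> minimal3 h u' v w' \<longrightarrow> (u, w) \<noteq> (u', w') \<longrightarrow>
        (u - u') * (w - w') < 0)"

definition hstar :: "(real \<Rightarrow> real \<Rightarrow> real) \<Rightarrow> real" where
  "hstar h = (INF x \<in> {0..1}. h x x)"

definition mset_h :: "(real \<Rightarrow> real \<Rightarrow> real) \<Rightarrow> real set" where
  "mset_h h = {a \<in> {0..1}. h a a = hstar h}"

definition D1 :: "(real \<Rightarrow> real \<Rightarrow> real) \<Rightarrow> real \<Rightarrow> real \<Rightarrow> real" where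
  "D1 h x y = deriv (\<lambda>t. h t y) x"

definition D2 :: "(real \<Rightarrow> real \<Rightarrow> real) \<Rightarrow> real \<Rightarrow> real \<Rightarrow> real" where
  "D2 h x y = deriv (\<lambda>t. h x t) y"

definition C1_on :: "(real \<times> real) set \<Rightarrow> (real \<Rightarrow> real \<Rightarrow> real) \<Rightarrow> bool" where
  "C1_on U h \<longleftrightarrow>
     (\<forall>(x, y) \<in> U. (\<lambda>t. h t y) differentiable (at x) \<and> (\<lambda>t. h x t) differentiable (at y)) \<and>
     continuous_on U (\<lambda>(x, y). D1 h x y) \<and> continuous_on U (\<lambda>(x, y). D2 h x y)"

definition oint :: "real \<Rightarrow> real \<Rightarrow> (real \<Rightarrow> real) \<Rightarrow> real" where
  "oint a b f = (if a \<le> b then integral {a..b} f else - integral {b..a} f)"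

end

theory Submission
  imports Defs
begin

text \<open>For a Monge cost (H3), deleting a maximal point from a closed chain lowers its cost by at
  least \<open>h\<^sup>*\<close>, so a closed chain of \<open>n\<close> steps costs at least \<open>n h\<^sup>*\<close>. Applied to periodic
  orbit segments this gives \<open>\<alpha>\<^sub>\<phi> = h\<^sup>*\<close>, the minimum being attained by the Dirac mass at a fixed
  point \<open>a\<^sup>\<infinity>\<close> with \<open>a \<in> m\<^sub>h\<close>.

  On the segment \<open>I\<^sub>a\<^sub>,\<^sub>b \<subseteq> m\<^sub>h\<close> the diagonal sits at level \<open>h\<^sup>*\<close>, so by the \<open>C\<^sup>1\<close> hypothesis a
  fine equidistant chain from \<open>p\<close> to \<open>q\<close> costs, above \<open>h\<^sup>*\<close> per step, both
  \<open>\<integral>\<^sub>p\<^sup>q D\<^sub>2h(x,x) dx + o(1)\<close> and \<open>-\<integral>\<^sub>p\<^sup>q D\<^sub>1h(x,x) dx + o(1)\<close>. Such a chain, preceded by a long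
  stay at \<open>p\<close>, bounds the barrier from above. Conversely, any orbit segment from near \<open>p\<close> to near
  \<open>q\<close>, closed up by the chain from \<open>q\<close> back to \<open>p\<close>, is a closed chain, hence costs at least
  \<open>\<integral>\<^sub>p\<^sup>q D\<^sub>2h(x,x) dx - o(1)\<close>.\<close>

section \<open>Closed chains of a Monge cost\<close>

fun chain_cost :: "('a \<Rightarrow> 'a \<Rightarrow> real) \<Rightarrow> 'a list \<Rightarrow> real" where
  "chain_cost h (x # y # zs) = h x y + chain_cost h (y # zs)"
| "chain_cost h _ = 0"

lemma chain_cost_append:
  assumes "xs \<noteq> []" "ys \<noteq> []"
  shows "chain_cost h (xs @ ys) = chain_cost h xs + h (last xs) (hd ys) + chain_cost h ys"
  using assms(1)
proof (induction xs rule: induct_list012)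
  case (2 x)
  then show ?case using assms(2) by (cases ys) auto
qed auto

lemma chain_cost_map_upt: "chain_cost h (map y [0..<Suc n]) = (\<Sum>i<n. h (y i) (y (Suc i)))"
proof (induction n)
  case (Suc n)
  have "chain_cost h (map y [0..<Suc n] @ [y (Suc n)])
      = chain_cost h (map y [0..<Suc n]) + h (y n) (y (Suc n))"
    by (subst chain_cost_append) (auto simp: last_map simp del: upt_Suc)
  then show ?case using Suc by simp
qed simp

lemma chain_cost_rotate:
  assumes "xs \<noteq> []"
  shows "chain_cost h (x # xs @ [x]) = chain_cost h (xs @ [x, hd xs])"
  using assms chain_cost_append[of "[x]" "xs @ [x]" h] chain_cost_append[of xs "[x]" h]
    chain_cost_append[of xs "[x, hd xs]" h]
  by simp

definition monge_on :: "'a::linorder set \<Rightarrow> ('a \<Rightarrow> 'a \<Rightarrow> real) \<Rightarrow> bool" where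
  "monge_on S h \<longleftrightarrow> (\<forall>x1\<in>S. \<forall>x2\<in>S. \<forall>y1\<in>S. \<forall>y2\<in>S.
     x1 \<le> x2 \<longrightarrow> y1 \<le> y2 \<longrightarrow> h x1 y1 + h x2 y2 \<le> h x1 y2 + h x2 y1)"

lemma chain_cost_remove_peak:
  assumes "monge_on S h" "us \<noteq> []" "vs \<noteq> []" "set us \<subseteq> S" "set vs \<subseteq> S" "M \<in> S"
    and "last us \<le> M" "hd vs \<le> M"
  shows "chain_cost h (us @ vs) + h M M \<le> chain_cost h (us @ M # vs)"
proof -
  have "h (last us) (hd vs) + h M M \<le> h (last us) M + h M (hd vs)"
    using assms unfolding monge_on_def by (meson hd_in_set last_in_set subsetD)
  moreover have "chain_cost h (M # vs) = h M (hd vs) + chain_cost h vs"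
    using \<open>vs \<noteq> []\<close> by (cases vs) auto
  ultimately show ?thesis
    using chain_cost_append[of us vs h] chain_cost_append[of us "M # vs" h] assms(2,3) by simp
qed

text \<open>\<open>M\<close> is a maximal point of the chain: by the Monge inequality it can be cut out at a gain
  of at least \<open>h M M\<close>.\<close>
lemma closed_chain_remove_peak:
  assumes "monge_on S h" "xs \<noteq> []" "set (x # xs) \<subseteq> S"
  obtains y ys M where "length ys = length xs - 1" "set (y # ys) \<subseteq> S" "M \<in> S"
    "chain_cost h (y # ys @ [y]) + h M M \<le> chain_cost h (x # xs @ [x])"
proof -
  define M where "M = Max (set xs)"
  have M: "M \<in> set xs" "\<And>u. u \<in> set xs \<Longrightarrow> u \<le> M"
    using assms(2) by (auto simp: M_def)
  show ?thesis
  proof (cases "x \<le> M")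
    case True
    obtain xs1 xs2 where xs: "xs = xs1 @ M # xs2" using M(1) split_list by metis
    have "chain_cost h ((x # xs1) @ (xs2 @ [x])) + h M M \<le> chain_cost h ((x # xs1) @ M # (xs2 @ [x]))"
      by (rule chain_cost_remove_peak[OF assms(1)])
        (use assms(3) M True in \<open>auto simp: xs hd_append last_ConsR\<close>)
    then show ?thesis
      by (intro that[where y=x and ys="xs1 @ xs2" and M=M]) (use assms(3) M xs in auto)
  next
    case False
    have closed: "xs @ [hd xs] = hd xs # tl xs @ [hd xs]"
      using assms(2) by simp
    have "chain_cost h (xs @ [hd xs]) + h x x \<le> chain_cost h (xs @ x # [hd xs])"
      by (rule chain_cost_remove_peak[OF assms(1)])
        (use assms(2,3) M(2)[OF hd_in_set] M(2)[OF last_in_set] False in auto)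
    also have "\<dots> = chain_cost h (x # xs @ [x])"
      using chain_cost_rotate[OF assms(2)] by simp
    finally show ?thesis
      unfolding closed
      using assms(2,3) by (intro that[where y="hd xs" and ys="tl xs" and M=x]) (auto dest: list.set_sel)
  qed
qed

lemma closed_chain_cost_ge:
  assumes "monge_on S h" "\<And>x. x \<in> S \<Longrightarrow> c \<le> h x x" "set (x # xs) \<subseteq> S"
  shows "real (Suc (length xs)) * c \<le> chain_cost h (x # xs @ [x])"
  using assms(3)
proof (induction "length xs" arbitrary: x xs rule: less_induct)
  case less
  show ?case
  proof (cases "xs = []")
    case True
    then show ?thesis using less.prems assms(2) by simp
  next
    case False
    obtain y ys M where ys: "length ys = length xs - 1" "set (y # ys) \<subseteq> S" "M \<in> S"
      "chain_cost h (y # ys @ [y]) + h M M \<le> chain_cost h (x # xs @ [x])"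
      using closed_chain_remove_peak[OF assms(1) False less.prems] .
    have "real (Suc (length ys)) * c \<le> chain_cost h (y # ys @ [y])"
      using False ys by (intro less.hyps) auto
    then show ?thesis using ys assms(2)[OF ys(3)] False by (simp add: algebra_simps)
  qed
qed

lemma Xs_memD: "x \<in> Xs \<Longrightarrow> x i \<in> {0..1}"
  by (simp add: Xs_def)

lemma shift_in_Xs: "x \<in> Xs \<Longrightarrow> shift x \<in> Xs"
  by (simp add: Xs_def shift_def)

lemma funpow_shift: "(shift ^^ n) z = (\<lambda>k. z (k + n))"
  by (induction n arbitrary: z) (auto simp: shift_def funpow_Suc_right)

lemma summable_dX:
  assumes "x \<in> Xs" "y \<in> Xs"
  shows "summable (\<lambda>i. \<bar>x i - y i\<bar> / 2 ^ (i + 1))"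
proof (rule summable_comparison_test'[where g="\<lambda>i. (1/2::real) ^ i" and N=0])
  fix n :: nat
  have "\<bar>x n - y n\<bar> \<le> 1"
    using Xs_memD[OF assms(1), of n] Xs_memD[OF assms(2), of n] by auto
  then have "\<bar>x n - y n\<bar> / 2 ^ (n + 1) \<le> 1 / 2 ^ n"
    by (simp add: frac_le)
  then show "norm (\<bar>x n - y n\<bar> / 2 ^ (n + 1)) \<le> (1/2::real) ^ n"
    by (simp add: power_one_over)
qed simp

lemma dX_nonneg: "x \<in> Xs \<Longrightarrow> y \<in> Xs \<Longrightarrow> 0 \<le> dX x y"
  unfolding dX_def using summable_dX by (intro suminf_nonneg) auto

lemma dX_self: "dX x x = 0"
  by (simp add: dX_def)

lemma abs_diff_le_dX:
  assumes "x \<in> Xs" "y \<in> Xs"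
  shows "\<bar>x i - y i\<bar> \<le> 2 ^ (i + 1) * dX x y"
proof -
  have "(\<Sum>j\<in>{i}. \<bar>x j - y j\<bar> / 2 ^ (j + 1)) \<le> dX x y"
    unfolding dX_def by (rule sum_le_suminf[OF summable_dX[OF assms]]) auto
  then show ?thesis by (simp add: field_simps)
qed

lemma dX_shift_le:
  assumes "x \<in> Xs" "y \<in> Xs"
  shows "dX (shift x) (shift y) \<le> 2 * dX x y"
proof -
  let ?f = "\<lambda>i. \<bar>x i - y i\<bar> / 2 ^ (i + 1)"
  have s: "summable ?f" by (rule summable_dX[OF assms])
  have "dX (shift x) (shift y) = (\<Sum>i. 2 * ?f (Suc i))"
    unfolding dX_def shift_def by (simp add: field_simps)
  also have "\<dots> = 2 * (\<Sum>i. ?f (Suc i))"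
    using summable_Suc_iff[THEN iffD2, OF s] by (subst suminf_mult) auto
  also have "(\<Sum>i. ?f (Suc i)) = dX x y - ?f 0"
    unfolding dX_def by (rule suminf_split_head[OF s])
  finally show ?thesis by simp
qed

lemma dX_le_if_agree:
  assumes "x \<in> Xs" "y \<in> Xs" "\<And>i. i < K \<Longrightarrow> x i = y i"
  shows "dX x y \<le> (1/2) ^ K"
proof -
  let ?f = "\<lambda>i. \<bar>x i - y i\<bar> / 2 ^ (i + 1)"
  have s: "summable ?f" by (rule summable_dX[OF assms(1,2)])
  have "dX x y = (\<Sum>n. ?f (n + K)) + (\<Sum>i<K. ?f i)"
    unfolding dX_def by (rule suminf_split_initial_segment[OF s])
  also have "(\<Sum>i<K. ?f i) = 0" using assms(3) by simp
  also have "(\<Sum>n. ?f (n + K)) \<le> (\<Sum>n. (1/2)^(K+1) * (1/2) ^ n)"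
  proof (rule suminf_le)
    fix n
    have "\<bar>x (n+K) - y (n+K)\<bar> \<le> 1"
      using Xs_memD[OF assms(1), of "n+K"] Xs_memD[OF assms(2), of "n+K"] by auto
    then have "?f (n + K) \<le> 1 / 2 ^ (n + K + 1)"
      by (simp add: divide_right_mono)
    then show "?f (n + K) \<le> (1/2)^(K+1) * (1/2) ^ n"
      by (simp add: power_add power_one_over mult_ac)
  qed (use summable_iff_shift[THEN iffD2, OF s] in simp_all)
  also have "(\<Sum>n. (1/2::real)^(K+1) * (1/2) ^ n) = (1/2)^K"
    by (subst suminf_mult) (simp_all add: suminf_geometric)
  finally show ?thesis by simp
qed

lemma space_borelX: "space borelX = Xs"
  unfolding borelX_def by (simp add: space_measure_of_conv)

lemma X_open_in_borelX: "X_open U \<Longrightarrow> U \<in> sets borelX"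
  unfolding borelX_def by (rule in_measure_of) (auto simp: X_open_def)

lemma borel_measurable_borelX_lipschitz:
  fixes f :: "(nat \<Rightarrow> real) \<Rightarrow> real"
  assumes L: "0 \<le> L" and lip: "\<And>x y. x \<in> Xs \<Longrightarrow> y \<in> Xs \<Longrightarrow> \<bar>f x - f y\<bar> \<le> L * dX x y"
  shows "f \<in> borel_measurable borelX"
proof (rule borel_measurableI)
  fix S :: "real set" assume S: "open S"
  have "X_open (f -` S \<inter> Xs)"
    unfolding X_open_def
  proof (intro conjI ballI)
    fix x assume x: "x \<in> f -` S \<inter> Xs"
    then obtain e where e: "e > 0" "ball (f x) e \<subseteq> S" using S openE by blast
    show "\<exists>e>0. \<forall>y\<in>Xs. dX x y < e \<longrightarrow> y \<in> f -` S \<inter> Xs"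
    proof (intro exI[of _ "e / (L + 1)"] conjI ballI impI)
      fix y assume y: "y \<in> Xs" "dX x y < e / (L + 1)"
      have "\<bar>f x - f y\<bar> \<le> (L + 1) * dX x y"
        using lip[of x y] dX_nonneg[of x y] x y by (simp add: algebra_simps)
      also have "\<dots> < e" using y L by (simp add: field_simps)
      finally have "f y \<in> ball (f x) e" by (simp add: dist_real_def)
      then show "y \<in> f -` S \<inter> Xs" using e y by auto
    qed (use e L in simp)
  qed auto
  then show "f -` S \<inter> space borelX \<in> sets borelX"
    using X_open_in_borelX space_borelX by simp
qed

lemma shift_measurable_borelX: "shift \<in> measurable borelX borelX"
proof -
  have "shift \<in> measurable borelX (measure_of Xs {U. X_open U} (\<lambda>_. 0))"
  proof (rule measurable_measure_of)
    fix U assume "U \<in> {U. X_open U}"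
    then have U: "X_open U" by simp
    have "X_open (shift -` U \<inter> Xs)"
      unfolding X_open_def
    proof (intro conjI ballI)
      fix x assume x: "x \<in> shift -` U \<inter> Xs"
      then obtain e where e: "e > 0" "\<forall>y\<in>Xs. dX (shift x) y < e \<longrightarrow> y \<in> U"
        using U unfolding X_open_def by blast
      show "\<exists>e>0. \<forall>y\<in>Xs. dX x y < e \<longrightarrow> y \<in> shift -` U \<inter> Xs"
      proof (intro exI[of _ "e / 2"] conjI ballI impI)
        fix y assume y: "y \<in> Xs" "dX x y < e / 2"
        have "dX (shift x) (shift y) < e" using dX_shift_le[of x y] x y by auto
        then show "y \<in> shift -` U \<inter> Xs" using e shift_in_Xs[OF y(1)] y by auto
      qed (use e in simp)
    qed auto
    then show "shift -` U \<inter> space borelX \<in> sets borelX"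
      using X_open_in_borelX space_borelX by simp
  qed (auto simp: X_open_def space_borelX shift_in_Xs)
  then show ?thesis unfolding borelX_def by simp
qed

section \<open>The minimal ergodic average\<close>

lemma classH_lipschitz:
  assumes "classH h"
  obtains C where "0 \<le> C" "\<And>x x' y y'. x \<in> {0..1} \<Longrightarrow> x' \<in> {0..1} \<Longrightarrow> y \<in> {0..1} \<Longrightarrow> y' \<in> {0..1}
     \<Longrightarrow> \<bar>h x y - h x' y'\<bar> \<le> C * (\<bar>x - x'\<bar> + \<bar>y - y'\<bar>)"
proof -
  obtain C where C: "C-lipschitz_on ({0..1} \<times> {0..1}) (\<lambda>(x, y). h x y)"
    using assms unfolding classH_def by blast
  have C0: "0 \<le> C" using lipschitz_on_nonneg[OF C] .
  show ?thesis
  proof (rule that[OF C0])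
    fix x x' y y' :: real
    assume "x \<in> {0..1}" "x' \<in> {0..1}" "y \<in> {0..1}" "y' \<in> {0..1}"
    then have "\<bar>h x y - h x' y'\<bar> \<le> C * dist (x, y) (x', y')"
      using lipschitz_onD[OF C, of "(x, y)" "(x', y')"] by (simp add: dist_real_def)
    also have "\<dots> \<le> C * (\<bar>x - x'\<bar> + \<bar>y - y'\<bar>)"
      using C0 sqrt_sum_squares_le_sum_abs[of "x - x'" "y - y'"]
      by (intro mult_left_mono) (simp_all add: dist_Pair_Pair dist_real_def)
    finally show "\<bar>h x y - h x' y'\<bar> \<le> C * (\<bar>x - x'\<bar> + \<bar>y - y'\<bar>)" .
  qed
qed

lemma classH_bounded:
  assumes "classH h"
  obtains B where "\<And>x y. x \<in> {0..1} \<Longrightarrow> y \<in> {0..1} \<Longrightarrow> \<bar>h x y\<bar> \<le> B"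
proof -
  obtain C where C: "0 \<le> C" "\<And>x x' y y'. x \<in> {0..1} \<Longrightarrow> x' \<in> {0..1} \<Longrightarrow> y \<in> {0..1} \<Longrightarrow> y' \<in> {0..1}
     \<Longrightarrow> \<bar>h x y - h x' y'\<bar> \<le> C * (\<bar>x - x'\<bar> + \<bar>y - y'\<bar>)"
    using classH_lipschitz[OF assms] by blast
  show ?thesis
  proof (rule that[of "\<bar>h 0 0\<bar> + 2 * C"])
    fix x y :: real assume xy: "x \<in> {0..1}" "y \<in> {0..1}"
    have "\<bar>h x y - h 0 0\<bar> \<le> C * (\<bar>x - 0\<bar> + \<bar>y - 0\<bar>)" by (rule C(2)) (use xy in auto)
    also have "\<dots> \<le> C * 2" using xy C(1) by (intro mult_left_mono) auto
    finally show "\<bar>h x y\<bar> \<le> \<bar>h 0 0\<bar> + 2 * C" by simp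
  qed
qed

lemma hstar_le_diag:
  assumes "classH h" "x \<in> {0..1}"
  shows "hstar h \<le> h x x"
proof -
  obtain B where "\<And>x y. x \<in> {0..1} \<Longrightarrow> y \<in> {0..1} \<Longrightarrow> \<bar>h x y\<bar> \<le> B"
    using classH_bounded[OF assms(1)] by blast
  then have "bdd_below ((\<lambda>x. h x x) ` {0..1})"
    by (intro bdd_belowI[of _ "-B"]) force
  then show ?thesis unfolding hstar_def using assms(2) by (rule cINF_lower)
qed

lemma classH_monge_on:
  assumes "classH h"
  shows "monge_on {0..1} h"
  unfolding monge_on_def
proof (intro ballI impI)
  fix x1 x2 y1 y2 :: real
  assume "x1 \<in> {0..1}" "x2 \<in> {0..1}" "y1 \<in> {0..1}" "y2 \<in> {0..1}" "x1 \<le> x2" "y1 \<le> y2"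
  then consider "x1 < x2 \<and> y1 < y2" | "x1 = x2" | "y1 = y2" by fastforce
  then show "h x1 y1 + h x2 y2 \<le> h x1 y2 + h x2 y1"
    by cases (use assms \<open>x1 \<in> {0..1}\<close> \<open>x2 \<in> {0..1}\<close> \<open>y1 \<in> {0..1}\<close> \<open>y2 \<in> {0..1}\<close>
      in \<open>auto simp: classH_def intro: less_imp_le\<close>)
qed

lemma classH_closed_chain_cost_ge:
  assumes "classH h" "set (x # xs) \<subseteq> {0..1}"
  shows "real (Suc (length xs)) * hstar h \<le> chain_cost h (x # xs @ [x])"
  using closed_chain_cost_ge[OF classH_monge_on[OF assms(1)] hstar_le_diag[OF assms(1)] assms(2)] .

lemma classH_closed_orbit_cost_ge:
  assumes "classH h" "x \<in> Xs"
  shows "real (Suc n) * hstar h \<le> (\<Sum>i<n. h (x i) (x (Suc i))) + h (x n) (x 0)"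
proof -
  have "set (x 0 # map x [1..<Suc n]) \<subseteq> {0..1}"
    using Xs_memD[OF assms(2)] by auto
  from classH_closed_chain_cost_ge[OF assms(1) this]
  have "real (Suc n) * hstar h \<le> chain_cost h (x 0 # map x [1..<Suc n] @ [x 0])"
    by (simp del: upt_Suc)
  also have "\<dots> = chain_cost h (map x [0..<Suc n] @ [x 0])"
    by (simp add: upt_conv_Cons del: upt_Suc)
  also have "\<dots> = (\<Sum>i<n. h (x i) (x (Suc i))) + h (x n) (x 0)"
    by (subst chain_cost_append) (auto simp: last_map chain_cost_map_upt simp del: upt_Suc)
  finally show ?thesis .
qed

lemma classH_cost_measurable:
  assumes "classH h"
  shows "(\<lambda>x. h (x 0) (x 1)) \<in> borel_measurable borelX"
proof -
  obtain C where C: "0 \<le> C" "\<And>x x' y y'. x \<in> {0..1} \<Longrightarrow> x' \<in> {0..1} \<Longrightarrow> y \<in> {0..1} \<Longrightarrow> y' \<in> {0..1}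
     \<Longrightarrow> \<bar>h x y - h x' y'\<bar> \<le> C * (\<bar>x - x'\<bar> + \<bar>y - y'\<bar>)"
    using classH_lipschitz[OF assms] by blast
  show ?thesis
  proof (rule borel_measurable_borelX_lipschitz[where L="6 * C"])
    fix x y assume xy: "x \<in> Xs" "y \<in> Xs"
    have "\<bar>h (x 0) (x 1) - h (y 0) (y 1)\<bar> \<le> C * (\<bar>x 0 - y 0\<bar> + \<bar>x 1 - y 1\<bar>)"
      using C(2) xy Xs_memD by blast
    also have "\<dots> \<le> C * (2 * dX x y + 4 * dX x y)"
      using abs_diff_le_dX[OF xy, of 0] abs_diff_le_dX[OF xy, of 1] C(1)
      by (intro mult_left_mono) auto
    finally show "\<bar>h (x 0) (x 1) - h (y 0) (y 1)\<bar> \<le> 6 * C * dX x y"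
      by (simp add: algebra_simps)
  qed (use C in simp)
qed

lemma inv_measures_distr_shift: "\<mu> \<in> inv_measures \<Longrightarrow> distr \<mu> \<mu> shift = \<mu>"
  unfolding inv_measures_def by (intro measure_eqI) (auto simp: emeasure_distr)

lemma inv_measures_integral_funpow_shift:
  fixes f :: "(nat \<Rightarrow> real) \<Rightarrow> real"
  assumes \<mu>: "\<mu> \<in> inv_measures" and f: "f \<in> borel_measurable borelX"
  shows "(\<integral>x. f ((shift ^^ n) x) \<partial>\<mu>) = (\<integral>x. f x \<partial>\<mu>)"
proof (induction n)
  case (Suc n)
  have sets: "sets \<mu> = sets borelX" and shift: "shift \<in> measurable \<mu> \<mu>"
    using \<mu> by (auto simp: inv_measures_def)
  have "(\<lambda>x. f ((shift ^^ n) x)) \<in> borel_measurable \<mu>"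
    using measurable_compose[OF measurable_compose_n[OF shift] f[folded measurable_cong_sets[OF sets refl]]]
    by (simp add: o_def)
  then have "(\<integral>x. f ((shift ^^ n) x) \<partial>distr \<mu> \<mu> shift) = (\<integral>x. f ((shift ^^ n) (shift x)) \<partial>\<mu>)"
    by (rule integral_distr[OF shift])
  then show ?case
    using Suc inv_measures_distr_shift[OF \<mu>] by (simp add: funpow_swap1)
qed simp

text \<open>Closing the orbit segment \<open>x\<^sub>0 \<dots> x\<^sub>n\<close> bounds the Birkhoff sum below by \<open>(n + 1) h\<^sup>* - B\<close>,
  while invariance makes its integral \<open>n\<close> times the integral of the cost.\<close>
lemma inv_measures_integral_ge_hstar:
  assumes hH: "classH h" and \<mu>: "\<mu> \<in> inv_measures"
  shows "hstar h \<le> (\<integral>x. h (x 0) (x 1) \<partial>\<mu>)"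
proof -
  interpret prob_space \<mu> using \<mu> by (simp add: inv_measures_def)
  have sets: "sets \<mu> = sets borelX" using \<mu> by (simp add: inv_measures_def)
  have space: "space \<mu> = Xs" using sets_eq_imp_space_eq[OF sets] space_borelX by simp
  obtain B where B: "\<And>x y. x \<in> {0..1} \<Longrightarrow> y \<in> {0..1} \<Longrightarrow> \<bar>h x y\<bar> \<le> B"
    using classH_bounded[OF hH] by blast
  define \<phi> where "\<phi> = (\<lambda>x::nat \<Rightarrow> real. h (x 0) (x 1))"
  have meas: "\<phi> \<in> borel_measurable borelX"
    unfolding \<phi>_def by (rule classH_cost_measurable[OF hH])
  have orbit: "\<phi> ((shift ^^ i) x) = h (x i) (x (Suc i))" for x i
    by (simp add: \<phi>_def funpow_shift)
  have int: "integrable \<mu> (\<lambda>x. \<phi> ((shift ^^ i) x))" for i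
  proof (rule integrable_const_bound[where B=B])
    show "(\<lambda>x. \<phi> ((shift ^^ i) x)) \<in> borel_measurable \<mu>"
      using measurable_compose[OF measurable_compose_n[OF shift_measurable_borelX] meas]
      by (simp add: measurable_cong_sets[OF sets refl] o_def)
  qed (use B Xs_memD space in \<open>auto simp: orbit\<close>)
  have bound: "real n * (hstar h - integral\<^sup>L \<mu> \<phi>) \<le> B - hstar h" for n
  proof -
    have "real (Suc n) * hstar h - B \<le> (\<integral>x. (\<Sum>i<n. \<phi> ((shift ^^ i) x)) \<partial>\<mu>)"
    proof (rule integral_ge_const)
      show "AE x in \<mu>. real (Suc n) * hstar h - B \<le> (\<Sum>i<n. \<phi> ((shift ^^ i) x))"
      proof (rule AE_I2)
        fix x assume "x \<in> space \<mu>"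
        then have x: "x \<in> Xs" using space by simp
        have "\<bar>h (x n) (x 0)\<bar> \<le> B" using B Xs_memD[OF x] by blast
        then show "real (Suc n) * hstar h - B \<le> (\<Sum>i<n. \<phi> ((shift ^^ i) x))"
          using classH_closed_orbit_cost_ge[OF hH x, of n] unfolding orbit by linarith
      qed
    qed (use int in simp)
    also have "\<dots> = real n * integral\<^sup>L \<mu> \<phi>"
      using int inv_measures_integral_funpow_shift[OF \<mu> meas] by simp
    finally show ?thesis by (simp add: algebra_simps)
  qed
  have "hstar h \<le> integral\<^sup>L \<mu> \<phi>"
  proof (rule ccontr)
    assume "\<not> hstar h \<le> integral\<^sup>L \<mu> \<phi>"
    then obtain n where "B - hstar h < real n * (hstar h - integral\<^sup>L \<mu> \<phi>)"
      using ex_less_of_nat_mult[of "hstar h - integral\<^sup>L \<mu> \<phi>"] by auto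
    then show False using bound[of n] by simp
  qed
  then show ?thesis by (simp add: \<phi>_def)
qed

lemma return_const_in_inv_measures:
  assumes "a \<in> {0..1}"
  shows "return borelX (\<lambda>_. a) \<in> inv_measures"
  unfolding inv_measures_def
proof (intro CollectI conjI ballI)
  have aX: "(\<lambda>_. a) \<in> Xs" using assms by (simp add: Xs_def)
  then show "prob_space (return borelX (\<lambda>_. a))"
    by (intro prob_space_return) (simp add: space_borelX)
  show "shift \<in> measurable (return borelX (\<lambda>_. a)) (return borelX (\<lambda>_. a))"
    using shift_measurable_borelX by simp
  fix A assume A: "A \<in> sets (return borelX (\<lambda>_. a))"
  have "shift -` A \<inter> Xs \<in> sets borelX"
    using measurable_sets[OF shift_measurable_borelX, of A] A by (simp add: space_borelX)
  moreover have "shift (\<lambda>_. a) = (\<lambda>_. a)" by (simp add: shift_def)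
  ultimately show "emeasure (return borelX (\<lambda>_. a)) (shift -` A \<inter> space (return borelX (\<lambda>_. a)))
      = emeasure (return borelX (\<lambda>_. a)) A"
    using A aX by (simp add: space_borelX indicator_def)
qed simp

lemma alpha_eq_hstar:
  assumes hH: "classH h" and a: "a \<in> {0..1}" "h a a = hstar h"
  shows "alpha (\<lambda>x. h (x 0) (x 1)) = hstar h"
  unfolding alpha_def
proof (rule cInf_eq_minimum)
  have "(\<integral>x. h (x 0) (x 1) \<partial>return borelX (\<lambda>_. a)) = hstar h"
    using classH_cost_measurable[OF hH] a by (subst integral_return) (auto simp: space_borelX Xs_def)
  then show "hstar h \<in> (\<lambda>\<mu>. \<integral>x. h (x 0) (x 1) \<partial>\<mu>) ` inv_measures"
    using return_const_in_inv_measures[OF a(1)] by force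
qed (use inv_measures_integral_ge_hstar[OF hH] in blast)

section \<open>Increments along the diagonal\<close>

lemma oint_self: "oint p p f = 0"
  by (simp add: oint_def)

lemma oint_swap: "oint q p f = - oint p q f"
  by (cases p q rule: linorder_cases) (auto simp: oint_def)

lemma has_real_derivative_oint:
  assumes f: "continuous_on (closed_segment p q) f" and s: "s \<in> closed_segment p q"
  shows "((\<lambda>s. oint p s f) has_real_derivative f s) (at s within closed_segment p q)"
proof (cases "p \<le> q")
  case True
  then have seg: "closed_segment p q = {p..q}" by (simp add: closed_segment_eq_real_ivl)
  have d: "((\<lambda>u. integral {p..u} f) has_real_derivative f s) (at s within {p..q})"
    by (rule integral_has_real_derivative) (use f s seg in auto)
  show ?thesis unfolding seg
    by (rule has_field_derivative_transform_within[OF d zero_less_one]) (use s seg in \<open>auto simp: oint_def\<close>)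
next
  case False
  then have seg: "closed_segment p q = {q..p}" by (simp add: closed_segment_eq_real_ivl)
  have fi: "f integrable_on {q..p}" using f seg integrable_continuous_real by auto
  have d: "((\<lambda>u. integral {q..u} f - integral {q..p} f) has_real_derivative f s) (at s within {q..p})"
    using integral_has_real_derivative[of q p f s] f s seg by (auto intro!: derivative_eq_intros)
  have eq: "integral {q..u} f - integral {q..p} f = oint p u f" if u: "u \<in> {q..p}" for u
  proof -
    have "integral {q..u} f + integral {u..p} f = integral {q..p} f"
      by (rule Henstock_Kurzweil_Integration.integral_combine) (use u fi in auto)
    moreover have "oint p u f = - integral {u..p} f"
      using u by (cases "u = p") (auto simp: oint_def)
    ultimately show ?thesis by simp
  qed
  show ?thesis unfolding seg
    by (rule has_field_derivative_transform_within[OF d zero_less_one]) (use s seg eq in auto)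
qed

lemma diagonal_band_subset_open:
  fixes S :: "real set"
  assumes "open W" "compact S" "\<And>x. x \<in> S \<Longrightarrow> (x, x) \<in> W"
  obtains r where "r > 0" "(S \<times> S) \<inter> {z. \<bar>snd z - fst z\<bar> \<le> r} \<subseteq> W"
proof -
  have "compact ((\<lambda>x. (x, x)) ` S)"
    by (intro compact_continuous_image continuous_intros assms(2))
  then obtain r where r: "0 < r" "\<And>x. x \<in> S \<Longrightarrow> ball (x, x) r \<subseteq> W"
    by (rule Heine_Borel_lemma[of _ "{W}"]) (use assms in auto)
  have "(x, s) \<in> W" if "x \<in> S" "\<bar>s - x\<bar> \<le> r / 2" for x s
  proof -
    have "(x, s) \<in> ball (x, x) r"
      using that r(1) by (simp add: dist_Pair_Pair dist_real_def abs_minus_commute)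
    then show ?thesis using r(2)[OF that(1)] by blast
  qed
  then show ?thesis
    using r(1) by (intro that[of "r / 2"]) auto
qed

lemma diagonal_increment_estimate:
  fixes k Dk :: "real \<Rightarrow> real \<Rightarrow> real"
  assumes W: "open W" and diag: "\<And>x. x \<in> closed_segment p q \<Longrightarrow> (x, x) \<in> W"
    and der: "\<And>x s. (x, s) \<in> W \<Longrightarrow> (k x has_real_derivative Dk x s) (at s)"
    and cont: "continuous_on W (\<lambda>(x, s). Dk x s)"
    and e: "0 < e"
  obtains \<eta> where "\<eta> > 0"
    "\<And>x s. x \<in> closed_segment p q \<Longrightarrow> s \<in> closed_segment p q \<Longrightarrow> \<bar>s - x\<bar> < \<eta> \<Longrightarrow>
       \<bar>k x s - k x x - (oint p s (\<lambda>t. Dk t t) - oint p x (\<lambda>t. Dk t t))\<bar> \<le> e * \<bar>s - x\<bar>"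
proof -
  define seg where "seg = closed_segment p q"
  define \<Phi> where "\<Phi> s = oint p s (\<lambda>t. Dk t t)" for s
  obtain r where r: "r > 0" and KW: "(seg \<times> seg) \<inter> {z. \<bar>snd z - fst z\<bar> \<le> r} \<subseteq> W"
    using diagonal_band_subset_open[OF W compact_segment diag] unfolding seg_def by blast
  define K where "K = (seg \<times> seg) \<inter> {z. \<bar>snd z - fst z\<bar> \<le> r}"
  have "compact K" unfolding K_def seg_def
    by (intro compact_Int_closed compact_Times compact_segment closed_Collect_le continuous_intros)
  then have "uniformly_continuous_on K (\<lambda>(x, s). Dk x s)"
    using KW by (intro compact_uniformly_continuous continuous_on_subset[OF cont]) (auto simp: K_def)
  then obtain d where d: "d > 0" "\<And>z z'. z \<in> K \<Longrightarrow> z' \<in> K \<Longrightarrow> dist z' z < d \<Longrightarrow>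
       dist ((\<lambda>(x, s). Dk x s) z') ((\<lambda>(x, s). Dk x s) z) < e"
    using e unfolding uniformly_continuous_on_def by metis
  have diagK: "(t, t) \<in> K" if "t \<in> seg" for t using that r by (simp add: K_def)
  have "continuous_on seg ((\<lambda>(x, s). Dk x s) \<circ> (\<lambda>t. (t, t)))"
    by (rule continuous_on_compose[OF _ continuous_on_subset[OF cont]])
       (use diag in \<open>auto simp: seg_def intro: continuous_on_Pair continuous_on_id\<close>)
  then have \<Phi>_deriv: "(\<Phi> has_real_derivative Dk t t) (at t within seg)" if "t \<in> seg" for t
    unfolding \<Phi>_def seg_def using that by (intro has_real_derivative_oint) (simp_all add: seg_def o_def)
  show ?thesis
  proof (rule that[of "min d r"])
    fix x s assume x: "x \<in> closed_segment p q" and s: "s \<in> closed_segment p q"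
      and xs: "\<bar>s - x\<bar> < min d r"
    define T where "T = closed_segment x s"
    have Tseg: "T \<subseteq> seg" unfolding T_def seg_def
      by (rule closed_segment_subset) (use x s in auto)
    text \<open>Mean value inequality for \<open>k x - \<Phi>\<close>, whose derivative \<open>Dk x t - Dk t t\<close> is small.\<close>
    have "norm ((\<lambda>t. k x t - \<Phi> t) s - (\<lambda>t. k x t - \<Phi> t) x) \<le> e * norm (s - x)"
    proof (rule field_differentiable_bound[where f'="\<lambda>t. Dk x t - Dk t t"])
      show "convex T" "s \<in> T" "x \<in> T" unfolding T_def by auto
      fix t assume t: "t \<in> T"
      have tx: "\<bar>t - x\<bar> \<le> \<bar>s - x\<bar>"
        using dist_in_closed_segment[of t x s] t by (simp add: T_def dist_real_def abs_minus_commute)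
      have tseg: "t \<in> seg" using t Tseg by auto
      have xK: "(x, t) \<in> K" using tx xs tseg x by (auto simp: K_def seg_def)
      have "dist (x, t) (t, t) < d"
        using tx xs by (simp add: dist_Pair_Pair dist_real_def abs_minus_commute)
      then show "norm (Dk x t - Dk t t) \<le> e"
        using d(2)[OF diagK[OF tseg] xK] by (simp add: dist_real_def)
      have "(x, t) \<in> W" using xK KW unfolding K_def by blast
      then have "(k x has_real_derivative Dk x t) (at t within T)"
        by (rule has_field_derivative_at_within[OF der])
      moreover have "(\<Phi> has_real_derivative Dk t t) (at t within T)"
        by (rule DERIV_subset[OF \<Phi>_deriv[OF tseg] Tseg])
      ultimately show "((\<lambda>t. k x t - \<Phi> t) has_real_derivative Dk x t - Dk t t) (at t within T)"
        by (intro derivative_eq_intros) auto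
    qed
    then show "\<bar>k x s - k x x - (oint p s (\<lambda>t. Dk t t) - oint p x (\<lambda>t. Dk t t))\<bar> \<le> e * \<bar>s - x\<bar>"
      by (simp add: \<Phi>_def algebra_simps)
  qed (use d r in simp)
qed

lemma sum_telescope_estimate:
  fixes a b c :: "nat \<Rightarrow> real"
  assumes "\<And>j. j < m \<Longrightarrow> \<bar>a j - (b (Suc j) - b j)\<bar> \<le> c j"
  shows "\<bar>(\<Sum>j<m. a j) - (b m - b 0)\<bar> \<le> (\<Sum>j<m. c j)"
proof -
  have "(\<Sum>j<m. a j) - (b m - b 0) = (\<Sum>j<m. a j - (b (Suc j) - b j))"
    using sum_lessThan_telescope[of b m] by (simp add: sum_subtractf sum.distrib algebra_simps)
  also have "\<bar>\<dots>\<bar> \<le> (\<Sum>j<m. \<bar>a j - (b (Suc j) - b j)\<bar>)"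
    by (rule sum_abs)
  also have "\<dots> \<le> (\<Sum>j<m. c j)"
    using assms by (intro sum_mono) auto
  finally show ?thesis .
qed

lemma chain_increment_estimate:
  fixes k :: "real \<Rightarrow> real \<Rightarrow> real" and \<Phi> :: "real \<Rightarrow> real" and y :: "nat \<Rightarrow> real"
  assumes est: "\<And>x s. x \<in> S \<Longrightarrow> s \<in> S \<Longrightarrow> \<bar>s - x\<bar> < \<eta> \<Longrightarrow>
      \<bar>k x s - k x x - (\<Phi> s - \<Phi> x)\<bar> \<le> e * \<bar>s - x\<bar>"
    and y: "\<And>j. y j \<in> S" "\<And>j. j < m \<Longrightarrow> \<bar>y (Suc j) - y j\<bar> < \<eta>"
  shows "\<bar>(\<Sum>j<m. k (y j) (y (Suc j)) - k (y j) (y j)) - (\<Phi> (y m) - \<Phi> (y 0))\<bar>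
      \<le> e * (\<Sum>j<m. \<bar>y (Suc j) - y j\<bar>)"
    and "\<bar>(\<Sum>j<m. k (y (Suc j)) (y j) - k (y (Suc j)) (y (Suc j))) - (\<Phi> (y 0) - \<Phi> (y m))\<bar>
      \<le> e * (\<Sum>j<m. \<bar>y (Suc j) - y j\<bar>)"
proof -
  show "\<bar>(\<Sum>j<m. k (y j) (y (Suc j)) - k (y j) (y j)) - (\<Phi> (y m) - \<Phi> (y 0))\<bar>
      \<le> e * (\<Sum>j<m. \<bar>y (Suc j) - y j\<bar>)"
    unfolding sum_distrib_left
    by (rule sum_telescope_estimate[where b="\<lambda>j. \<Phi> (y j)"]) (use est y in auto)
  have "\<bar>(\<Sum>j<m. k (y (Suc j)) (y j) - k (y (Suc j)) (y (Suc j))) - (- \<Phi> (y m) - - \<Phi> (y 0))\<bar>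
      \<le> (\<Sum>j<m. e * \<bar>y (Suc j) - y j\<bar>)"
  proof (rule sum_telescope_estimate)
    fix j assume "j < m"
    then have "\<bar>y j - y (Suc j)\<bar> < \<eta>" using y(2) by (simp add: abs_minus_commute)
    then have "\<bar>k (y (Suc j)) (y j) - k (y (Suc j)) (y (Suc j)) - (\<Phi> (y j) - \<Phi> (y (Suc j)))\<bar>
        \<le> e * \<bar>y j - y (Suc j)\<bar>"
      using y(1) by (intro est) auto
    then show "\<bar>k (y (Suc j)) (y j) - k (y (Suc j)) (y (Suc j)) - (- \<Phi> (y (Suc j)) - - \<Phi> (y j))\<bar>
        \<le> e * \<bar>y (Suc j) - y j\<bar>"
      by (simp add: abs_minus_commute)
  qed
  then show "\<bar>(\<Sum>j<m. k (y (Suc j)) (y j) - k (y (Suc j)) (y (Suc j))) - (\<Phi> (y 0) - \<Phi> (y m))\<bar>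
      \<le> e * (\<Sum>j<m. \<bar>y (Suc j) - y j\<bar>)"
    by (simp add: sum_distrib_left)
qed

definition segment_chain :: "real \<Rightarrow> real \<Rightarrow> nat \<Rightarrow> nat \<Rightarrow> real" where
  "segment_chain p q m j = p + real (min j m) * (q - p) / real m"

lemma segment_chain_0 [simp]: "segment_chain p q m 0 = p"
  by (simp add: segment_chain_def)

lemma segment_chain_ge: "1 \<le> m \<Longrightarrow> m \<le> j \<Longrightarrow> segment_chain p q m j = q"
  by (simp add: segment_chain_def)

lemma segment_chain_in_segment:
  assumes "1 \<le> m"
  shows "segment_chain p q m j \<in> closed_segment p q"
proof -
  define u where "u = real (min j m) / real m"
  have "0 \<le> u" "u \<le> 1" using assms by (auto simp: u_def)
  moreover have "segment_chain p q m j = (1 - u) *\<^sub>R p + u *\<^sub>R q"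
    using assms by (simp add: segment_chain_def u_def field_simps)
  ultimately show ?thesis using in_segment(1) by blast
qed

lemma segment_chain_step:
  "j < m \<Longrightarrow> segment_chain p q m (Suc j) - segment_chain p q m j = (q - p) / real m"
  by (simp add: segment_chain_def min_def field_simps)

lemma segment_chain_length:
  "1 \<le> m \<Longrightarrow> (\<Sum>j<m. \<bar>segment_chain p q m (Suc j) - segment_chain p q m j\<bar>) = \<bar>q - p\<bar>"
  by (simp add: segment_chain_step)

lemma segment_chain_fine:
  assumes "\<eta> > 0"
  obtains m where "1 \<le> m" "\<And>j. j < m \<Longrightarrow> \<bar>segment_chain p q m (Suc j) - segment_chain p q m j\<bar> < \<eta>"
proof -
  obtain m :: nat where m: "\<bar>q - p\<bar> / \<eta> < real m"
    using reals_Archimedean2 by blast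
  moreover have "0 \<le> \<bar>q - p\<bar> / \<eta>"
    using assms by simp
  ultimately have "1 \<le> m"
    by (cases m) auto
  moreover have "\<bar>q - p\<bar> / real m < \<eta>"
    using m assms \<open>1 \<le> m\<close> by (simp add: pos_divide_less_eq mult.commute)
  ultimately show ?thesis
    using segment_chain_step[of _ m p q] by (intro that) auto
qed

locale C1_minimal_segment =
  fixes h :: "real \<Rightarrow> real \<Rightarrow> real" and p q :: real and U :: "(real \<times> real) set"
  assumes classH: "classH h"
    and open_U: "open U" and diagonal_in_U: "{(x, x) | x. x \<in> closed_segment p q} \<subseteq> U"
    and C1: "C1_on U h"
    and segment_minimal: "closed_segment p q \<subseteq> mset_h h"
begin

lemma commute: "C1_minimal_segment h q p U"
  using C1_minimal_segment_axioms by (simp add: C1_minimal_segment_def closed_segment_commute)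

lemma segment_in_unit: "x \<in> closed_segment p q \<Longrightarrow> x \<in> {0..1}"
  using segment_minimal by (auto simp: mset_h_def)

lemma diag_eq_hstar: "x \<in> closed_segment p q \<Longrightarrow> h x x = hstar h"
  using segment_minimal by (auto simp: mset_h_def)

lemma endpoints: "p \<in> {0..1}" "q \<in> {0..1}" "h p p = hstar h" "h q q = hstar h"
  using segment_in_unit diag_eq_hstar by auto

lemma D2_estimate:
  assumes "e > 0"
  obtains \<eta> where "\<eta> > 0"
    "\<And>x s. x \<in> closed_segment p q \<Longrightarrow> s \<in> closed_segment p q \<Longrightarrow> \<bar>s - x\<bar> < \<eta> \<Longrightarrow>
       \<bar>h x s - h x x - (oint p s (\<lambda>t. D2 h t t) - oint p x (\<lambda>t. D2 h t t))\<bar> \<le> e * \<bar>s - x\<bar>"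
proof (rule diagonal_increment_estimate[OF open_U _ _ _ assms])
  show "(x, x) \<in> U" if "x \<in> closed_segment p q" for x
    using that diagonal_in_U by blast
  fix x s assume "(x, s) \<in> U"
  then have "(\<lambda>t. h x t) differentiable (at s)" using C1 unfolding C1_on_def by auto
  then show "(h x has_real_derivative D2 h x s) (at s)"
    unfolding D2_def by (simp add: DERIV_deriv_iff_real_differentiable)
next
  show "continuous_on U (\<lambda>(x, s). D2 h x s)" using C1 unfolding C1_on_def by auto
qed (rule that)

lemma D1_estimate:
  assumes "e > 0"
  obtains \<eta> where "\<eta> > 0"
    "\<And>x s. x \<in> closed_segment p q \<Longrightarrow> s \<in> closed_segment p q \<Longrightarrow> \<bar>s - x\<bar> < \<eta> \<Longrightarrow>
       \<bar>h s x - h x x - (oint p s (\<lambda>t. D1 h t t) - oint p x (\<lambda>t. D1 h t t))\<bar> \<le> e * \<bar>s - x\<bar>"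
proof (rule diagonal_increment_estimate[where k="\<lambda>x s. h s x" and Dk="\<lambda>x s. D1 h s x" and W="prod.swap -` U",
      OF _ _ _ _ assms])
  show "open (prod.swap -` U)"
    by (rule open_vimage[OF open_U]) (intro continuous_intros)
  show "(x, x) \<in> prod.swap -` U" if "x \<in> closed_segment p q" for x
    using that diagonal_in_U by auto
  fix x s assume "(x, s) \<in> prod.swap -` U"
  then have "(\<lambda>t. h t x) differentiable (at s)" using C1 unfolding C1_on_def by auto
  then show "((\<lambda>s. h s x) has_real_derivative D1 h s x) (at s)"
    unfolding D1_def by (simp add: DERIV_deriv_iff_real_differentiable)
next
  have "continuous_on (prod.swap -` U) ((\<lambda>(x, s). D1 h x s) \<circ> prod.swap)"
    using C1 unfolding C1_on_def
    by (intro continuous_on_compose continuous_intros) (auto intro: continuous_on_subset)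
  then show "continuous_on (prod.swap -` U) (\<lambda>(x, s). D1 h s x)"
    by (simp add: o_def case_prod_beta prod.swap_def)
qed (rule that)

text \<open>As the diagonal is at level \<open>h\<^sup>*\<close> on the segment, the cost of the chain above \<open>h\<^sup>*\<close> is the
  sum of the increments \<open>h y\<^sub>j y\<^sub>j\<^sub>+\<^sub>1 - h y\<^sub>j y\<^sub>j\<close> and also of \<open>h y\<^sub>j y\<^sub>j\<^sub>+\<^sub>1 - h y\<^sub>j\<^sub>+\<^sub>1 y\<^sub>j\<^sub>+\<^sub>1\<close>.\<close>
lemma segment_chain_cost_approx:
  assumes "e > 0"
  obtains m where "1 \<le> m"
    "\<bar>(\<Sum>j<m. h (segment_chain p q m j) (segment_chain p q m (Suc j)) - hstar h)
       - oint p q (\<lambda>t. D2 h t t)\<bar> \<le> e"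
    "\<bar>(\<Sum>j<m. h (segment_chain p q m j) (segment_chain p q m (Suc j)) - hstar h)
       + oint p q (\<lambda>t. D1 h t t)\<bar> \<le> e"
proof -
  define e' where "e' = e / (\<bar>q - p\<bar> + 1)"
  have e': "e' > 0" and e'_le: "e' * \<bar>q - p\<bar> \<le> e"
    using assms by (auto simp: e'_def field_simps)
  obtain \<eta>2 where \<eta>2: "\<eta>2 > 0"
    "\<And>x s. x \<in> closed_segment p q \<Longrightarrow> s \<in> closed_segment p q \<Longrightarrow> \<bar>s - x\<bar> < \<eta>2 \<Longrightarrow>
       \<bar>h x s - h x x - (oint p s (\<lambda>t. D2 h t t) - oint p x (\<lambda>t. D2 h t t))\<bar> \<le> e' * \<bar>s - x\<bar>"
    using D2_estimate[OF e'] by blast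
  obtain \<eta>1 where \<eta>1: "\<eta>1 > 0"
    "\<And>x s. x \<in> closed_segment p q \<Longrightarrow> s \<in> closed_segment p q \<Longrightarrow> \<bar>s - x\<bar> < \<eta>1 \<Longrightarrow>
       \<bar>h s x - h x x - (oint p s (\<lambda>t. D1 h t t) - oint p x (\<lambda>t. D1 h t t))\<bar> \<le> e' * \<bar>s - x\<bar>"
    using D1_estimate[OF e'] by blast
  obtain m where "1 \<le> m" and fine:
    "\<And>j. j < m \<Longrightarrow> \<bar>segment_chain p q m (Suc j) - segment_chain p q m j\<bar> < min \<eta>1 \<eta>2"
    using segment_chain_fine[of "min \<eta>1 \<eta>2"] \<eta>1(1) \<eta>2(1) by auto
  define y where "y = segment_chain p q m"
  have y_seg: "y j \<in> closed_segment p q" for j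
    unfolding y_def using segment_chain_in_segment[OF \<open>1 \<le> m\<close>] .
  have steps: "\<bar>y (Suc j) - y j\<bar> < \<eta>1" "\<bar>y (Suc j) - y j\<bar> < \<eta>2" if "j < m" for j
    using fine[OF that] by (simp_all add: y_def)
  have length: "(\<Sum>j<m. \<bar>y (Suc j) - y j\<bar>) = \<bar>q - p\<bar>"
    unfolding y_def using segment_chain_length[OF \<open>1 \<le> m\<close>] .
  have ends: "y 0 = p" "y m = q"
    using segment_chain_ge[OF \<open>1 \<le> m\<close>] by (simp_all add: y_def)
  have cost: "(\<Sum>j<m. h (y j) (y (Suc j)) - h (y j) (y j)) = (\<Sum>j<m. h (y j) (y (Suc j)) - hstar h)"
    "(\<Sum>j<m. h (y j) (y (Suc j)) - h (y (Suc j)) (y (Suc j))) = (\<Sum>j<m. h (y j) (y (Suc j)) - hstar h)"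
    using diag_eq_hstar[OF y_seg] by simp_all
  have "\<bar>(\<Sum>j<m. h (y j) (y (Suc j)) - h (y j) (y j))
      - (oint p (y m) (\<lambda>t. D2 h t t) - oint p (y 0) (\<lambda>t. D2 h t t))\<bar>
      \<le> e' * (\<Sum>j<m. \<bar>y (Suc j) - y j\<bar>)"
    by (rule chain_increment_estimate(1)[where k=h and \<Phi>="\<lambda>s. oint p s (\<lambda>t. D2 h t t)" and y=y,
          OF \<eta>2(2) y_seg steps(2)])
  moreover have "\<bar>(\<Sum>j<m. h (y j) (y (Suc j)) - h (y (Suc j)) (y (Suc j)))
      - (oint p (y 0) (\<lambda>t. D1 h t t) - oint p (y m) (\<lambda>t. D1 h t t))\<bar>
      \<le> e' * (\<Sum>j<m. \<bar>y (Suc j) - y j\<bar>)"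
    by (rule chain_increment_estimate(2)[where k="\<lambda>x s. h s x" and \<Phi>="\<lambda>s. oint p s (\<lambda>t. D1 h t t)"
          and y=y, OF \<eta>1(2) y_seg steps(1)])
  ultimately show ?thesis
    using e'_le by (intro that[OF \<open>1 \<le> m\<close>, folded y_def]) (simp_all add: cost length ends oint_self)
qed

lemma oint_D2_eq_neg_oint_D1: "oint p q (\<lambda>t. D2 h t t) = - oint p q (\<lambda>t. D1 h t t)"
proof -
  have "\<bar>oint p q (\<lambda>t. D2 h t t) + oint p q (\<lambda>t. D1 h t t)\<bar> \<le> 0 + e" if e: "e > 0" for e
  proof -
    obtain m where "1 \<le> m" "\<bar>(\<Sum>j<m. h (segment_chain p q m j) (segment_chain p q m (Suc j)) - hstar h)
        - oint p q (\<lambda>t. D2 h t t)\<bar> \<le> e / 2"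
      "\<bar>(\<Sum>j<m. h (segment_chain p q m j) (segment_chain p q m (Suc j)) - hstar h)
        + oint p q (\<lambda>t. D1 h t t)\<bar> \<le> e / 2"
      using segment_chain_cost_approx[OF half_gt_zero[OF e]] by blast
    then show ?thesis by linarith
  qed
  then have "\<bar>oint p q (\<lambda>t. D2 h t t) + oint p q (\<lambda>t. D1 h t t)\<bar> \<le> 0"
    by (rule field_le_epsilon)
  then show ?thesis by simp
qed

end

section \<open>The Peierls barrier between fixed points\<close>

lemma sum_delayed_chain_cost:
  fixes h :: "real \<Rightarrow> real \<Rightarrow> real" and y :: "nat \<Rightarrow> real"
  assumes y: "y 0 = p" "\<And>j. m \<le> j \<Longrightarrow> y j = q" and diag: "h p p = c" "h q q = c"
    and n: "K + m \<le> n"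
  shows "(\<Sum>i<n. h (y (i - K)) (y (Suc i - K)) - c) = (\<Sum>j<m. h (y j) (y (Suc j)) - c)"
  using n
proof (induction n rule: dec_induct)
  case base
  have split: "(\<Sum>i<K + m. f i) = (\<Sum>i<K. f i) + (\<Sum>j<m. f (K + j))" for f :: "nat \<Rightarrow> real"
    by (induction m) auto
  have "(\<Sum>i<K. h (y (i - K)) (y (Suc i - K)) - c) = 0"
    by (rule sum.neutral) (auto simp: y diag)
  then show ?case by (simp add: split)
next
  case (step n)
  then show ?case using y diag by simp
qed

lemma classH_orbit_closing_cost_ge:
  assumes "classH h" "z \<in> Xs" "p \<in> {0..1}"
    and w: "w 0 = q" "w m = p" "\<And>j. w j \<in> {0..1}"
  shows "real (n + m + 2) * hstar h
    \<le> h p (z 0) + (\<Sum>i<n. h (z i) (z (Suc i))) + h (z n) q + (\<Sum>j<m. h (w j) (w (Suc j)))"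
proof -
  define xs where "xs = map z [0..<Suc n] @ map w [0..<m]"
  have "set (p # xs) \<subseteq> {0..1}"
    using assms(3) Xs_memD[OF assms(2)] w(3) by (auto simp: xs_def)
  from classH_closed_chain_cost_ge[OF assms(1) this]
  have "real (n + m + 2) * hstar h \<le> chain_cost h (p # xs @ [p])"
    by (simp add: xs_def)
  also have "p # xs @ [p] = [p] @ map z [0..<Suc n] @ map w [0..<Suc m]"
    using w(2) by (simp add: xs_def)
  also have "chain_cost h \<dots>
      = h p (z 0) + (\<Sum>i<n. h (z i) (z (Suc i))) + h (z n) q + (\<Sum>j<m. h (w j) (w (Suc j)))"
  proof -
    have "chain_cost h ([p] @ map z [0..<Suc n] @ map w [0..<Suc m])
        = h p (z 0) + chain_cost h (map z [0..<Suc n] @ map w [0..<Suc m])"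
      by (subst chain_cost_append) (simp_all add: hd_map del: upt_Suc)
    moreover have "chain_cost h (map z [0..<Suc n] @ map w [0..<Suc m])
        = chain_cost h (map z [0..<Suc n]) + h (z n) q + chain_cost h (map w [0..<Suc m])"
      using w(1) by (subst chain_cost_append) (simp_all add: hd_map last_map del: upt_Suc)
    ultimately show ?thesis
      by (simp only: chain_cost_map_upt)
  qed
  finally show ?thesis .
qed

lemma Bset_const_endpoints:
  assumes "z \<in> Bset (\<lambda>_. p) (\<lambda>_. q) n \<epsilon>" "p \<in> {0..1}" "q \<in> {0..1}"
  shows "z \<in> Xs" "\<bar>z 0 - p\<bar> < 2 * \<epsilon>" "\<bar>z n - q\<bar> < 2 * \<epsilon>"
proof -
  have pX: "(\<lambda>_. p) \<in> Xs" and qX: "(\<lambda>_. q) \<in> Xs"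
    using assms(2,3) by (auto simp: Xs_def)
  show z: "z \<in> Xs" using assms(1) by (simp add: Bset_def)
  have "(shift ^^ n) z \<in> Xs"
    using z by (simp add: funpow_shift Xs_def)
  then show "\<bar>z n - q\<bar> < 2 * \<epsilon>"
    using abs_diff_le_dX[OF _ qX, of _ 0] assms(1) by (fastforce simp: Bset_def funpow_shift)
  show "\<bar>z 0 - p\<bar> < 2 * \<epsilon>"
    using abs_diff_le_dX[OF pX z, of 0] assms(1) by (simp add: Bset_def abs_minus_commute)
qed

lemma Bset_orbit_cost_ge:
  assumes "classH h"
    and C: "0 \<le> C" "\<And>x x' y y'. x \<in> {0..1} \<Longrightarrow> x' \<in> {0..1} \<Longrightarrow> y \<in> {0..1} \<Longrightarrow> y' \<in> {0..1}
     \<Longrightarrow> \<bar>h x y - h x' y'\<bar> \<le> C * (\<bar>x - x'\<bar> + \<bar>y - y'\<bar>)"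
    and z: "z \<in> Bset (\<lambda>_. p) (\<lambda>_. q) n \<epsilon>" and diag: "h p p = hstar h" "h q q = hstar h"
    and w: "w 0 = q" "w m = p" "\<And>j. w j \<in> {0..1}"
  shows "- (\<Sum>j<m. h (w j) (w (Suc j)) - hstar h) - 4 * C * \<epsilon> \<le> (\<Sum>i<n. h (z i) (z (Suc i)) - hstar h)"
proof -
  have pq: "p \<in> {0..1}" "q \<in> {0..1}"
    using w by metis+
  note ends = Bset_const_endpoints[OF z pq]
  have "\<bar>h p (z 0) - h p p\<bar> \<le> C * (\<bar>p - p\<bar> + \<bar>z 0 - p\<bar>)"
    using pq Xs_memD[OF ends(1)] by (intro C(2)) auto
  also have "\<dots> \<le> C * (2 * \<epsilon>)"
    using ends(2) C(1) by (intro mult_left_mono) auto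
  finally have start: "h p (z 0) \<le> hstar h + 2 * C * \<epsilon>"
    using diag by simp
  have "\<bar>h (z n) q - h q q\<bar> \<le> C * (\<bar>z n - q\<bar> + \<bar>q - q\<bar>)"
    using pq Xs_memD[OF ends(1)] by (intro C(2)) auto
  also have "\<dots> \<le> C * (2 * \<epsilon>)"
    using ends(3) C(1) by (intro mult_left_mono) auto
  finally have stop: "h (z n) q \<le> hstar h + 2 * C * \<epsilon>"
    using diag by simp
  have "real (n + m + 2) * hstar h
      \<le> h p (z 0) + (\<Sum>i<n. h (z i) (z (Suc i))) + h (z n) q + (\<Sum>j<m. h (w j) (w (Suc j)))"
    using classH_orbit_closing_cost_ge[OF assms(1) ends(1) pq(1) w] .
  moreover have "real (n + m + 2) * hstar h = real n * hstar h + real m * hstar h + 2 * hstar h"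
    by (simp add: algebra_simps)
  ultimately show ?thesis
    using start stop by (simp add: sum_subtractf)
qed

lemma tendsto_ereal_sandwichI:
  assumes upper: "\<forall>\<^sub>F x in F. f x \<le> ereal A"
    and lower: "\<And>\<delta>. 0 < \<delta> \<Longrightarrow> \<forall>\<^sub>F x in F. ereal (A - \<delta>) \<le> f x"
  shows "(f \<longlongrightarrow> ereal A) F"
proof (rule order_tendstoI)
  fix a assume "a < ereal A"
  then obtain r where r: "a < ereal r" "r < A"
    by (metis ereal_dense2 less_ereal.simps(1))
  show "\<forall>\<^sub>F x in F. a < f x"
    using lower[of "A - r"] r by (auto elim: eventually_mono intro: less_le_trans)
next
  fix a assume "ereal A < a"
  then show "\<forall>\<^sub>F x in F. f x < a"
    using upper by (auto elim: eventually_mono intro: le_less_trans)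
qed

definition peierls_approx :: "(real \<Rightarrow> real \<Rightarrow> real) \<Rightarrow> real \<Rightarrow> real \<Rightarrow> real \<Rightarrow> ereal" where
  "peierls_approx h p q \<epsilon> = liminf (\<lambda>n. INF z \<in> Bset (\<lambda>_. p) (\<lambda>_. q) n \<epsilon>.
      ereal (\<Sum>i<n. h (z i) (z (Suc i)) - hstar h))"

lemma peierls_eq_Lim_peierls_approx:
  assumes "classH h" "p \<in> {0..1}" "h p p = hstar h"
  shows "peierls (\<lambda>x. h (x 0) (x 1)) (\<lambda>_. p) (\<lambda>_. q) = Lim (at_right 0) (peierls_approx h p q)"
  unfolding peierls_def peierls_approx_def alpha_eq_hstar[OF assms] by (simp add: funpow_shift)

context C1_minimal_segment
begin

lemma peierls_approx_le:
  assumes "\<epsilon> > 0"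
  shows "peierls_approx h p q \<epsilon> \<le> ereal (oint p q (\<lambda>t. D2 h t t))"
proof (rule ereal_le_epsilon2)
  fix \<delta> :: real assume "0 < \<delta>"
  then obtain m where m: "1 \<le> m" and approx:
    "\<bar>(\<Sum>j<m. h (segment_chain p q m j) (segment_chain p q m (Suc j)) - hstar h)
      - oint p q (\<lambda>t. D2 h t t)\<bar> \<le> \<delta>"
    using segment_chain_cost_approx by blast
  then have cost: "(\<Sum>j<m. h (segment_chain p q m j) (segment_chain p q m (Suc j)) - hstar h)
      \<le> oint p q (\<lambda>t. D2 h t t) + \<delta>"
    by (simp add: abs_le_iff)
  define y where "y = segment_chain p q m"
  have y: "y 0 = p" "\<And>j. m \<le> j \<Longrightarrow> y j = q" "\<And>j. y j \<in> {0..1}"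
    using segment_chain_ge[OF m] segment_in_unit[OF segment_chain_in_segment[OF m]] by (auto simp: y_def)
  obtain K where K: "(1/2::real) ^ K < \<epsilon>"
    using real_arch_pow_inv[OF assms, of "1/2"] by auto
  text \<open>Wait \<open>K\<close> steps at \<open>p\<close>, then follow the chain and stay at \<open>q\<close>.\<close>
  define z where "z k = y (k - K)" for k
  have "(INF z \<in> Bset (\<lambda>_. p) (\<lambda>_. q) n \<epsilon>. ereal (\<Sum>i<n. h (z i) (z (Suc i)) - hstar h))
      \<le> ereal (oint p q (\<lambda>t. D2 h t t) + \<delta>)" if n: "K + m \<le> n" for n
  proof (rule INF_lower2)
    have zX: "z \<in> Xs" using y(3) by (simp add: Xs_def z_def)
    have "dX (\<lambda>_. p) z \<le> (1/2) ^ K"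
      using y(1,3) by (intro dX_le_if_agree) (auto simp: Xs_def z_def)
    moreover have "(shift ^^ n) z = (\<lambda>_. q)"
      using n y(2) by (auto simp: funpow_shift z_def)
    ultimately show "z \<in> Bset (\<lambda>_. p) (\<lambda>_. q) n \<epsilon>"
      using zX K assms by (simp add: Bset_def dX_self)
    have "(\<Sum>i<n. h (z i) (z (Suc i)) - hstar h) = (\<Sum>j<m. h (y j) (y (Suc j)) - hstar h)"
      unfolding z_def by (rule sum_delayed_chain_cost[where h=h and y=y, OF y(1,2) endpoints(3,4) n])
    then show "ereal (\<Sum>i<n. h (z i) (z (Suc i)) - hstar h) \<le> ereal (oint p q (\<lambda>t. D2 h t t) + \<delta>)"
      using cost by (simp add: y_def)
  qed
  then have "peierls_approx h p q \<epsilon> \<le> ereal (oint p q (\<lambda>t. D2 h t t) + \<delta>)"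
    unfolding peierls_approx_def by (intro Liminf_le eventually_sequentiallyI) auto
  then show "peierls_approx h p q \<epsilon> \<le> ereal (oint p q (\<lambda>t. D2 h t t)) + ereal \<delta>"
    by simp
qed

lemma peierls_approx_ge:
  assumes "\<delta> > 0"
  shows "\<forall>\<^sub>F \<epsilon> in at_right 0. ereal (oint p q (\<lambda>t. D2 h t t) - \<delta>) \<le> peierls_approx h p q \<epsilon>"
proof -
  interpret reverse: C1_minimal_segment h q p U by (rule commute)
  define A where "A = oint p q (\<lambda>t. D2 h t t)"
  obtain C where C: "0 \<le> C" "\<And>x x' y y'. x \<in> {0..1} \<Longrightarrow> x' \<in> {0..1} \<Longrightarrow> y \<in> {0..1} \<Longrightarrow> y' \<in> {0..1}
     \<Longrightarrow> \<bar>h x y - h x' y'\<bar> \<le> C * (\<bar>x - x'\<bar> + \<bar>y - y'\<bar>)"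
    using classH_lipschitz[OF classH] by blast
  obtain m where m: "1 \<le> m" and approx:
    "\<bar>(\<Sum>j<m. h (segment_chain q p m j) (segment_chain q p m (Suc j)) - hstar h)
      - oint q p (\<lambda>t. D2 h t t)\<bar> \<le> \<delta> / 2"
    using reverse.segment_chain_cost_approx[OF half_gt_zero[OF assms]] by blast
  then have cost:
    "(\<Sum>j<m. h (segment_chain q p m j) (segment_chain q p m (Suc j)) - hstar h) \<le> - A + \<delta> / 2"
    using oint_swap[of q p "\<lambda>t. D2 h t t"] unfolding A_def abs_le_iff by linarith
  define w where "w = segment_chain q p m"
  have w: "w 0 = q" "w m = p" "\<And>j. w j \<in> {0..1}"
    using segment_chain_ge[OF m] reverse.segment_in_unit[OF segment_chain_in_segment[OF m]]
    by (auto simp: w_def)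
  have bound: "ereal (A - \<delta>) \<le> peierls_approx h p q \<epsilon>" if \<epsilon>: "4 * C * \<epsilon> < \<delta> / 2" for \<epsilon>
  proof -
    have "A - \<delta> \<le> (\<Sum>i<n. h (z i) (z (Suc i)) - hstar h)"
      if "z \<in> Bset (\<lambda>_. p) (\<lambda>_. q) n \<epsilon>" for n z
      using Bset_orbit_cost_ge[OF classH C that endpoints(3,4) w] cost \<epsilon> by (simp add: w_def)
    then show ?thesis
      unfolding peierls_approx_def by (intro Liminf_bounded always_eventually allI INF_greatest) auto
  qed
  have "((\<lambda>\<epsilon>. 4 * C * \<epsilon>) \<longlongrightarrow> 0) (at_right 0)"
    by (auto intro!: tendsto_eq_intros)
  then have "\<forall>\<^sub>F \<epsilon> in at_right 0. 4 * C * \<epsilon> < \<delta> / 2"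
    using assms by (intro order_tendstoD(2)) auto
  then show ?thesis
    by (rule eventually_mono) (rule bound[unfolded A_def])
qed

lemma peierls_const_eq:
  "peierls (\<lambda>x. h (x 0) (x 1)) (\<lambda>_. p) (\<lambda>_. q) = ereal (oint p q (\<lambda>t. D2 h t t))"
proof -
  have "(peierls_approx h p q \<longlongrightarrow> ereal (oint p q (\<lambda>t. D2 h t t))) (at_right 0)"
  proof (rule tendsto_ereal_sandwichI)
    show "\<forall>\<^sub>F \<epsilon> in at_right 0. peierls_approx h p q \<epsilon> \<le> ereal (oint p q (\<lambda>t. D2 h t t))"
      using eventually_at_right_less by (rule eventually_mono) (rule peierls_approx_le)
  qed (rule peierls_approx_ge)
  then show ?thesis
    using peierls_eq_Lim_peierls_approx[OF classH endpoints(1,3)] by (simp add: tendsto_Lim)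
qed

end

theorem proposition4p7:
  fixes h :: "real \<Rightarrow> real \<Rightarrow> real" and a b :: real
  assumes hH: "classH h"
    and ab: "a \<in> {0..1}" "b \<in> {0..1}" "a \<noteq> b"
    and C1: "\<exists>U. open U \<and> {(x, x) | x. x \<in> closed_segment a b} \<subseteq> U \<and> C1_on U h"
    and sub: "closed_segment a b \<subseteq> mset_h h"
  shows "peierls (\<lambda>x. h (x 0) (x 1)) (\<lambda>_. a) (\<lambda>_. b) = ereal (oint a b (\<lambda>x. D2 h x x))
       \<and> oint a b (\<lambda>x. D2 h x x) = - oint a b (\<lambda>x. D1 h x x)
       \<and> ereal (- oint a b (\<lambda>x. D1 h x x)) = - peierls (\<lambda>x. h (x 0) (x 1)) (\<lambda>_. b) (\<lambda>_. a)"
proof -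
  obtain U where "open U" "{(x, x) | x. x \<in> closed_segment a b} \<subseteq> U" "C1_on U h"
    using C1 by blast
  then interpret forward: C1_minimal_segment h a b U
    using hH sub by unfold_locales
  interpret backward: C1_minimal_segment h b a U
    by (rule forward.commute)
  show ?thesis
    using forward.peierls_const_eq backward.peierls_const_eq forward.oint_D2_eq_neg_oint_D1
      oint_swap[of b a "\<lambda>x. D2 h x x"]
    by simp
qed

end
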